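(* Let $\mathcal{H}$ be a connected $k$-uniform hypergraph on $n$ vertices with degree sequence $d_{1}\geq\cdots\geq d_{n}$, and let $\mathcal{Q}(\mathcal{H})$ be its signless Laplacian tensor. Then (1) $\rho(\mathcal{Q}(\mathcal{H}))\geq d_{1}$; (2) $\rho(\mathcal{Q}(\mathcal{H}))\leq d_{1}+d_{1}^{\frac{1}{k}}d_{2}^{1-\frac{1}{k}}$, with equality if and only if $\mathcal{H}$ is a regular hypergraph.
   Context: A $k$-uniform hypergraph $\mathcal{H}$ on vertex set $[n]$ has edges that are $k$-element subsets of $[n]$; $d_i$ is the number of edges containing vertex $i$, and $\mathcal{H}$ is regular if all $d_i$ are equal. The adjacency tensor $\mathcal{A}(\mathcal{H})$ is the order-$k$, dimension-$n$ tensor with $\mathcal{A}_{i_1\cdots i_k}=\frac{1}{(k-1)!}$ if $\{i_1,\dots,i_k\}\in E(\mathcal{H})$ and $0$ otherwise. $\mathcal{D}(\mathcal{H})$ is the order-$k$ dimension-$n$ diagonal tensor with $\mathcal{D}_{i\cdots i}=d_i$, and $\mathcal{Q}(\mathcal{H})=\mathcal{D}(\mathcal{H})+\mathcal{A}(\mathcal{H})$ is the signless Laplacian tensor. For a tensor $\mathcal{T}$ and $x\in\mathbb{C}^n$, $(\mathcal{T}x)_i=\sum_{i_2,\dots,i_k}\mathcal{T}_{ii_2\cdots i_k}x_{i_2}\cdots x_{i_k}$; $\lambda$ is an eigenvalue if $\mathcal{T}x=\lambda x^{[k-1]}$ for some nonzero $x\in\mathbb{C}^n$, where $x^{[k-1]}=(x_1^{k-1},\dots,x_n^{k-1})^T$;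 $\rho(\mathcal{T})$ is the maximum modulus of eigenvalues. *)

theory Defs
  imports Complex_Main
begin

definition uniform_hypergraph :: "nat \<Rightarrow> nat \<Rightarrow> nat set set \<Rightarrow> bool" where
  "uniform_hypergraph n k E \<longleftrightarrow> (\<forall>e\<in>E. e \<subseteq> {1..n} \<and> card e = k)"

definition hdeg :: "nat set set \<Rightarrow> nat \<Rightarrow> nat" where
  "hdeg E i = card {e\<in>E. i \<in> e}"

text \<open>Degree sequence sorted non-increasingly: d_1 >= ... >= d_n; d_i = deg_seq n E ! (i-1).\<close>
definition deg_seq :: "nat \<Rightarrow> nat set set \<Rightarrow> nat list" where
  "deg_seq n E = rev (sort (map (hdeg E) [1..<n+1]))"

definition hconnected :: "nat \<Rightarrow> nat set set \<Rightarrow> bool" where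
  "hconnected n E \<longleftrightarrow>
     (\<forall>u\<in>{1..n}. \<forall>v\<in>{1..n}. (u, v) \<in> {(a, b). \<exists>e\<in>E. a \<in> e \<and> b \<in> e}\<^sup>*)"

definition hregular :: "nat \<Rightarrow> nat set set \<Rightarrow> bool" where
  "hregular n E \<longleftrightarrow> (\<forall>i\<in>{1..n}. \<forall>j\<in>{1..n}. hdeg E i = hdeg E j)"

text \<open>Order-k, dimension-n tensors: functions on index lists of length k with entries in {1..n}.\<close>
type_synonym tensor = "nat list \<Rightarrow> real"

definition adj_tensor :: "nat \<Rightarrow> nat set set \<Rightarrow> tensor" where
  "adj_tensor k E = (\<lambda>is. if set is \<in> E then 1 / fact (k - 1) else 0)"

definition deg_tensor :: "nat set set \<Rightarrow> tensor" where
  "deg_tensor E = (\<lambda>is. if is \<noteq> [] \<and> (\<forall>j\<in>set is. j = hd is) then real (hdeg E (hd is)) else 0)"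

definition signless_laplacian :: "nat \<Rightarrow> nat set set \<Rightarrow> tensor" where
  "signless_laplacian k E = (\<lambda>is. deg_tensor E is + adj_tensor k E is)"

definition tensor_apply :: "nat \<Rightarrow> nat \<Rightarrow> tensor \<Rightarrow> (nat \<Rightarrow> complex) \<Rightarrow> nat \<Rightarrow> complex" where
  "tensor_apply n k T x i =
     (\<Sum>is\<in>{is. length is = k - 1 \<and> set is \<subseteq> {1..n}}.
        complex_of_real (T (i # is)) * (\<Prod>j\<leftarrow>is. x j))"

definition tensor_eigenvalue :: "nat \<Rightarrow> nat \<Rightarrow> tensor \<Rightarrow> complex \<Rightarrow> bool" where
  "tensor_eigenvalue n k T lam \<longleftrightarrow>
     (\<exists>x :: nat \<Rightarrow> complex. (\<exists>i\<in>{1..n}. x i \<noteq> 0) \<and>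
        (\<forall>i\<in>{1..n}. tensor_apply n k T x i = lam * x i ^ (k - 1)))"

definition spectral_radius :: "nat \<Rightarrow> nat \<Rightarrow> tensor \<Rightarrow> real" where
  "spectral_radius n k T = Sup (cmod ` {lam. tensor_eigenvalue n k T lam})"

end

theory Submission
  imports Defs "HOL-Analysis.Analysis" "HOL-Combinatorics.Multiset_Permutations"
begin

text \<open>
  On a vector \<open>x\<close> the signless Laplacian acts as
  \<open>(Q x)\<^sub>i = d\<^sub>i x\<^sub>i\<^sup>k\<^sup>-\<^sup>1 + \<Sum>\<^sub>e\<^sub>\<ni>\<^sub>i \<Prod>\<^sub>j\<^sub>\<in>\<^sub>e\<^sub>-\<^sub>{\<^sub>i\<^sub>} x\<^sub>j\<close>.
  For the lower bound, the unit vector at a vertex \<open>v\<close> of maximum degree is an eigenvector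
  for \<open>d\<^sub>v\<close> when \<open>k \<ge> 3\<close>, and for \<open>k = 2\<close> the top eigenvalue of the symmetric matrix \<open>Q\<close>
  dominates its Rayleigh quotient \<open>Q\<^sub>v\<^sub>v = d\<^sub>v\<close>.

  For the upper bound, an eigenpair \<open>(\<lambda>, x)\<close> satisfies
  \<open>|\<lambda>| |x\<^sub>i|\<^sup>k\<^sup>-\<^sup>1 \<le> d\<^sub>i |x\<^sub>i|\<^sup>k\<^sup>-\<^sup>1 + \<Sum>\<^sub>e\<^sub>\<ni>\<^sub>i \<Prod>\<^sub>j\<^sub>\<in>\<^sub>e\<^sub>-\<^sub>{\<^sub>i\<^sub>} |x\<^sub>j|\<close>.
  Put the weight \<open>\<alpha> = (d\<^sub>1/d\<^sub>2)\<^sup>1\<^sup>/\<^sup>k\<close> on \<open>v\<close> and \<open>1\<close> elsewhere, and look at a vertex \<open>p\<close>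
  maximising \<open>|x\<^sub>j|/w\<^sub>j\<close>: there the inequality holds with \<open>w\<close> in place of \<open>|x|\<close>, which gives
  \<open>|\<lambda>| \<le> d\<^sub>1 + d\<^sub>1\<^sup>1\<^sup>/\<^sup>k d\<^sub>2\<^sup>1\<^sup>-\<^sup>1\<^sup>/\<^sup>k\<close> whether \<open>p = v\<close> or not. The spectral radius is attained
  (eigenvalues form a closed bounded set), and attaining the bound forces \<open>d\<^sub>1 = d\<^sub>2\<close>, i.e.
  \<open>|\<lambda>| = 2d\<^sub>1\<close>. With unit weights this equality makes every neighbour of a maximal vertex of
  \<open>|x|\<close> maximal with degree \<open>d\<^sub>1\<close>; by connectivity \<open>H\<close> is regular. Conversely the all-ones
  vector is an eigenvector for \<open>2d\<^sub>1\<close> of a regular hypergraph.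
\<close>

lemma compact_PiE_UNIV:
  fixes C :: "'i \<Rightarrow> 'a::topological_space set"
  assumes "\<And>i. compact (C i)"
  shows "compact (Pi\<^sub>E UNIV C)"
proof -
  have "compactin (product_topology (\<lambda>i. euclidean) UNIV) (Pi\<^sub>E UNIV C)"
    by (rule iffD2[OF compactin_PiE]) (use assms in auto)
  thus ?thesis by (metis euclidean_product_topology compactin_euclidean_iff)
qed

lemma seq_compact_PiE_UNIV_coordinatewise:
  fixes C :: "nat \<Rightarrow> 'a::first_countable_topology set" and f :: "nat \<Rightarrow> nat \<Rightarrow> 'a"
  assumes "\<And>i. compact (C i)" "\<And>m. f m \<in> Pi\<^sub>E UNIV C"
  shows "\<exists>l r. strict_mono r \<and> (\<forall>i. (\<lambda>m. f (r m) i) \<longlonglongrightarrow> l i)"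
proof -
  have "seq_compact (Pi\<^sub>E UNIV C)" by (rule compact_imp_seq_compact[OF compact_PiE_UNIV[OF assms(1)]])
  then obtain l r where l: "l \<in> Pi\<^sub>E UNIV C" "strict_mono r" "(f \<circ> r) \<longlonglongrightarrow> l"
    using \<open>seq_compact _\<close>[unfolded seq_compact_def, rule_format, of f] assms(2) by blast
  have "(\<lambda>m. f (r m) i) \<longlonglongrightarrow> l i" for i
    using continuous_on_tendsto_compose[OF continuous_on_product_coordinates[of i] l(3)] by (simp add: o_def)
  thus ?thesis using l by blast
qed

lemma norm_le_1_if_sum_norm_sq_eq_1:
  fixes x :: "'b \<Rightarrow> 'a::real_normed_vector"
  assumes "finite V" "(\<Sum>i\<in>V. norm (x i) ^ 2) = 1" "i \<in> V"
  shows "norm (x i) \<le> 1"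
  using assms member_le_sum[of i V "\<lambda>i. norm (x i) ^ 2"] by (simp add: abs_square_le_1)

lemma continuous_on_coordinate [continuous_intros]: "continuous_on S (\<lambda>x. x i :: 'a::topological_space)"
  by (rule continuous_on_subset[OF continuous_on_product_coordinates]) simp

section \<open>Maximising a symmetric quadratic form\<close>

lemma linear_coeff_eq_0_if_quadratic_nonpos:
  fixes a b :: real
  assumes H: "\<And>e. e * a + e^2 * b \<le> 0"
  shows "a = 0"
proof (rule ccontr)
  assume a: "a \<noteq> 0"
  define c where "c = \<bar>b\<bar> + 1"
  have c0: "c > 0" unfolding c_def by simp
  define e where "e = a / c"
  have "e^2 * b \<ge> - (e^2 * \<bar>b\<bar>)" using mult_left_mono[of "-\<bar>b\<bar>" b "e^2"] by simp
  moreover have "e * a - e^2 * \<bar>b\<bar> = a^2 / c^2"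
  proof -
    have bc: "\<bar>b\<bar> = c - 1" unfolding c_def by simp
    show ?thesis unfolding bc e_def using c0 by (simp add: field_simps power2_eq_square)
  qed
  moreover have "a^2 / c^2 > 0" using a c0 by simp
  ultimately have "e * a + e^2 * b > 0" by linarith
  thus False using H[of e] by simp
qed

definition quad_form :: "nat set \<Rightarrow> (nat \<Rightarrow> nat \<Rightarrow> real) \<Rightarrow> (nat \<Rightarrow> real) \<Rightarrow> real" where
  "quad_form V A z = (\<Sum>i\<in>V. \<Sum>j\<in>V. A i j * z i * z j)"

lemma quad_form_scale: "quad_form V A (\<lambda>i. c * z i) = c^2 * quad_form V A z"
  unfolding quad_form_def by (simp add: sum_distrib_left algebra_simps power2_eq_square)

lemma quad_form_cong: "(\<And>i. i \<in> V \<Longrightarrow> z i = z' i) \<Longrightarrow> quad_form V A z = quad_form V A z'"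
  unfolding quad_form_def by (intro sum.cong refl) auto

lemma quad_form_add_unit:
  assumes fin: "finite V" and i0: "i0 \<in> V" and sym: "\<And>i j. i \<in> V \<Longrightarrow> j \<in> V \<Longrightarrow> A i j = A j i"
  shows "quad_form V A (\<lambda>i. x i + e * (if i = i0 then 1 else 0))
       = quad_form V A x + 2 * e * (\<Sum>j\<in>V. A i0 j * x j) + e^2 * A i0 i0"
proof -
  define d where "d = (\<lambda>i. if i = i0 then 1 else (0::real))"
  have ds: "(\<Sum>i\<in>V. d i * F i) = F i0" for F
  proof -
    have "(\<Sum>i\<in>V. d i * F i) = (\<Sum>i\<in>V. if i = i0 then F i else 0)" by (intro sum.cong refl) (simp add: d_def)
    also have "\<dots> = F i0" using fin i0 by (simp add: sum.delta')
    finally show ?thesis .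
  qed
  have pt: "A i j * (x i + e * d i) * (x j + e * d j) = A i j * x i * x j + e * (d i * (A i j * x j))
     + e * (d j * (A i j * x i)) + e^2 * (d i * (d j * A i j))" for i j
    by (simp add: algebra_simps power2_eq_square)
  have "quad_form V A (\<lambda>i. x i + e * d i) = quad_form V A x + e * (\<Sum>i\<in>V. d i * (\<Sum>j\<in>V. A i j * x j))
     + e * (\<Sum>i\<in>V. \<Sum>j\<in>V. d j * (A i j * x i)) + e^2 * (\<Sum>i\<in>V. d i * (\<Sum>j\<in>V. d j * A i j))"
    unfolding quad_form_def pt by (simp add: sum.distrib sum_distrib_left)
  also have "(\<Sum>i\<in>V. \<Sum>j\<in>V. d j * (A i j * x i)) = (\<Sum>i\<in>V. x i * (\<Sum>j\<in>V. d j * A i j))"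
    by (simp add: sum_distrib_left algebra_simps)
  also have "\<dots> = (\<Sum>i\<in>V. x i * A i i0)" using ds by simp
  also have "\<dots> = (\<Sum>j\<in>V. A i0 j * x j)" using sym i0 by (intro sum.cong refl) (simp add: mult.commute)
  also have "(\<Sum>i\<in>V. d i * (\<Sum>j\<in>V. A i j * x j)) = (\<Sum>j\<in>V. A i0 j * x j)" using ds by simp
  also have "(\<Sum>i\<in>V. d i * (\<Sum>j\<in>V. d j * A i j)) = A i0 i0" using ds by simp
  finally show ?thesis unfolding d_def by (simp add: algebra_simps)
qed

lemma quad_form_unit_vector:
  assumes fin: "finite V" and v: "v \<in> V"
  shows "quad_form V A (\<lambda>i. if i = v then 1 else 0) = A v v"
proof -
  have "quad_form V A (\<lambda>i. if i = v then 1 else 0) = (\<Sum>i\<in>V. if i = v then (\<Sum>j\<in>V. if j = v then A i j else 0) else 0)"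
    unfolding quad_form_def by (intro sum.cong refl) (auto intro: sum.cong)
  also have "\<dots> = A v v" using fin v by (simp add: sum.delta')
  finally show ?thesis .
qed

lemma quad_form_le_by_homogeneity:
  assumes fin: "finite V"
    and unit: "\<And>z. (\<And>i. i \<notin> V \<Longrightarrow> z i = 0) \<Longrightarrow> (\<Sum>i\<in>V. z i ^ 2) = 1 \<Longrightarrow> quad_form V A z \<le> \<mu>"
    and zV: "\<And>i. i \<notin> V \<Longrightarrow> z i = 0"
  shows "quad_form V A z \<le> \<mu> * (\<Sum>i\<in>V. z i ^ 2)"
proof (cases "(\<Sum>i\<in>V. z i ^ 2) = 0")
  case True
  hence "\<forall>i\<in>V. z i = 0" using sum_nonneg_eq_0_iff[OF fin, of "\<lambda>i. z i ^ 2"] by simp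
  hence "quad_form V A z = quad_form V A (\<lambda>_. 0)" by (intro quad_form_cong) simp
  thus ?thesis using True by (simp add: quad_form_def)
next
  case False
  define s where "s = (\<Sum>i\<in>V. z i ^ 2)"
  have s0: "s > 0" using False unfolding s_def by (simp add: less_le sum_nonneg)
  define r where "r = 1 / sqrt s"
  have r2: "r ^ 2 = 1 / s" unfolding r_def using s0 by (simp add: power_divide)
  have "(\<Sum>i\<in>V. (r * z i) ^ 2) = r ^ 2 * s" unfolding s_def by (simp add: power_mult_distrib sum_distrib_left)
  hence "quad_form V A (\<lambda>i. r * z i) \<le> \<mu>" using r2 s0 zV by (intro unit) auto
  hence "quad_form V A z / s \<le> \<mu>" using quad_form_scale[of V A r z] r2 by simp
  thus ?thesis using s0 unfolding s_def by (simp add: divide_le_eq mult.commute)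
qed

lemma quad_form_attains_max_on_sphere:
  assumes fin: "finite V" and z0: "(\<Sum>i\<in>V. z0 i ^ 2) = 1"
  obtains x where "\<And>i. i \<notin> V \<Longrightarrow> x i = 0" "(\<Sum>i\<in>V. x i ^ 2) = 1" "quad_form V A z0 \<le> quad_form V A x"
    "\<And>z. (\<And>i. i \<notin> V \<Longrightarrow> z i = 0) \<Longrightarrow> (\<Sum>i\<in>V. z i ^ 2) = 1 \<Longrightarrow> quad_form V A z \<le> quad_form V A x"
proof -
  define C where "C = (\<lambda>i. if i \<in> V then cball 0 1 else {0::real})"
  define S where "S = Pi\<^sub>E UNIV C \<inter> {z. (\<Sum>i\<in>V. z i ^ 2) = 1}"
  have "closed {z :: nat \<Rightarrow> real. (\<Sum>i\<in>V. z i ^ 2) = 1}"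
    by (intro closed_Collect_eq continuous_intros)
  hence compact: "compact S" unfolding S_def C_def by (intro compact_Int_closed compact_PiE_UNIV) auto
  have S_iff: "z \<in> S \<longleftrightarrow> (\<forall>i. i \<notin> V \<longrightarrow> z i = 0) \<and> (\<Sum>i\<in>V. z i ^ 2) = 1" for z
  proof -
    have "\<bar>z i\<bar> \<le> 1" if "(\<Sum>i\<in>V. z i ^ 2) = 1" "i \<in> V" for i
      using norm_le_1_if_sum_norm_sq_eq_1[OF fin _ that(2), of z] that(1) by simp
    thus ?thesis unfolding S_def C_def by (auto simp: PiE_iff)
  qed
  define z1 where "z1 = (\<lambda>i. if i \<in> V then z0 i else 0)"
  have z1: "z1 \<in> S" unfolding S_iff z1_def using z0 by simp
  moreover have "continuous_on S (quad_form V A)" unfolding quad_form_def by (intro continuous_intros)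
  ultimately obtain x where x: "x \<in> S" and max: "\<And>z. z \<in> S \<Longrightarrow> quad_form V A z \<le> quad_form V A x"
    using continuous_attains_sup[OF compact] by blast
  show ?thesis
  proof (rule that)
    show "\<And>i. i \<notin> V \<Longrightarrow> x i = 0" "(\<Sum>i\<in>V. x i ^ 2) = 1" using x unfolding S_iff by auto
    have "quad_form V A z0 = quad_form V A z1" by (rule quad_form_cong) (simp add: z1_def)
    thus "quad_form V A z0 \<le> quad_form V A x" using max[OF z1] by simp
    show "quad_form V A z \<le> quad_form V A x"
      if "\<And>i. i \<notin> V \<Longrightarrow> z i = 0" "(\<Sum>i\<in>V. z i ^ 2) = 1" for z
      using that by (intro max) (simp add: S_iff)
  qed
qed

text \<open>The Lagrange condition at a maximiser: along the perturbation \<open>x + e \<delta>\<^sub>i\<^sub>0\<close> the quadratic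
  \<open>e \<mapsto> 2e(Ax - \<mu>x)\<^sub>i\<^sub>0 + e\<^sup>2(A\<^sub>i\<^sub>0\<^sub>i\<^sub>0 - \<mu>)\<close> is never positive, so its linear coefficient vanishes.\<close>

lemma eigenvector_if_quad_form_max:
  assumes fin: "finite V" and sym: "\<And>i j. i \<in> V \<Longrightarrow> j \<in> V \<Longrightarrow> A i j = A j i"
    and x0: "\<And>i. i \<notin> V \<Longrightarrow> x i = 0" and x1: "(\<Sum>i\<in>V. x i ^ 2) = 1"
    and max: "\<And>z. (\<And>i. i \<notin> V \<Longrightarrow> z i = 0) \<Longrightarrow> quad_form V A z \<le> quad_form V A x * (\<Sum>i\<in>V. z i ^ 2)"
    and i0: "i0 \<in> V"
  shows "(\<Sum>j\<in>V. A i0 j * x j) = quad_form V A x * x i0"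
proof -
  define \<mu> where "\<mu> = quad_form V A x"
  define L where "L = (\<Sum>j\<in>V. A i0 j * x j)"
  have "e * (2 * (L - \<mu> * x i0)) + e ^ 2 * (A i0 i0 - \<mu>) \<le> 0" for e
  proof -
    define z where "z = (\<lambda>i. x i + e * (if i = i0 then 1 else 0))"
    have "(\<Sum>i\<in>V. z i ^ 2) = (\<Sum>i\<in>V. x i ^ 2) + (\<Sum>i\<in>V. if i = i0 then 2 * e * x i + e ^ 2 else 0)"
      unfolding z_def sum.distrib[symmetric] by (intro sum.cong refl) (auto simp: power2_eq_square algebra_simps)
    also have "\<dots> = 1 + 2 * e * x i0 + e ^ 2" using x1 fin i0 by (simp add: sum.delta')
    finally have "(\<Sum>i\<in>V. z i ^ 2) = 1 + 2 * e * x i0 + e ^ 2" .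
    moreover have "quad_form V A z = \<mu> + 2 * e * L + e ^ 2 * A i0 i0"
      unfolding z_def L_def \<mu>_def by (rule quad_form_add_unit[OF fin i0 sym])
    moreover have "quad_form V A z \<le> \<mu> * (\<Sum>i\<in>V. z i ^ 2)"
      unfolding \<mu>_def using x0 i0 by (intro max) (auto simp: z_def)
    ultimately show ?thesis by (simp add: algebra_simps)
  qed
  hence "2 * (L - \<mu> * x i0) = 0" by (rule linear_coeff_eq_0_if_quadratic_nonpos)
  thus ?thesis unfolding L_def \<mu>_def by simp
qed

lemma symmetric_eigenvector_ge_quad_form:
  fixes A :: "nat \<Rightarrow> nat \<Rightarrow> real" and z0 :: "nat \<Rightarrow> real"
  assumes fin: "finite V" and sym: "\<And>i j. i \<in> V \<Longrightarrow> j \<in> V \<Longrightarrow> A i j = A j i"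
    and z0: "(\<Sum>i\<in>V. z0 i ^ 2) = 1"
  shows "\<exists>x \<mu>. (\<exists>i\<in>V. x i \<noteq> 0) \<and> (\<forall>i\<in>V. (\<Sum>j\<in>V. A i j * x j) = \<mu> * x i) \<and> quad_form V A z0 \<le> \<mu>"
proof -
  obtain x where x0: "\<And>i. i \<notin> V \<Longrightarrow> x i = 0" and x1: "(\<Sum>i\<in>V. x i ^ 2) = 1"
    and ge: "quad_form V A z0 \<le> quad_form V A x"
    and max: "\<And>z. (\<And>i. i \<notin> V \<Longrightarrow> z i = 0) \<Longrightarrow> (\<Sum>i\<in>V. z i ^ 2) = 1 \<Longrightarrow> quad_form V A z \<le> quad_form V A x"
    using quad_form_attains_max_on_sphere[OF fin z0] by blast
  have "\<forall>i\<in>V. (\<Sum>j\<in>V. A i j * x j) = quad_form V A x * x i"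
    using eigenvector_if_quad_form_max[OF fin sym x0 x1 quad_form_le_by_homogeneity[OF fin max]] by blast
  moreover have "\<exists>i\<in>V. x i \<noteq> 0" using x1 by (rule contrapos_pp) simp
  ultimately show ?thesis using ge by blast
qed

lemma finite_obtains_argmax:
  fixes f :: "'a \<Rightarrow> 'b::linorder"
  assumes "finite S" "S \<noteq> {}"
  obtains p where "p \<in> S" "\<And>i. i \<in> S \<Longrightarrow> f i \<le> f p"
proof -
  have "Max (f ` S) \<in> f ` S" using assms by (intro Max_in) auto
  then obtain p where "p \<in> S" "f p = Max (f ` S)" by auto
  thus ?thesis using that assms by (metis Max_ge finite_imageI imageI)
qed

lemma rev_sort_map_first_second:
  fixes f :: "'a \<Rightarrow> 'b::linorder"
  assumes "distinct xs" "length xs \<ge> 2"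
  obtains v where "v \<in> set xs" "f v = rev (sort (map f xs)) ! 0"
    "\<And>i. i \<in> set xs \<Longrightarrow> i \<noteq> v \<Longrightarrow> f i \<le> rev (sort (map f xs)) ! 1"
    "rev (sort (map f xs)) ! 1 \<le> rev (sort (map f xs)) ! 0"
proof -
  obtain s0 s1 rest where s: "rev (sort (map f xs)) = s0 # s1 # rest"
  proof -
    have "length (rev (sort (map f xs))) \<ge> Suc (Suc 0)" using assms(2) by simp
    thus ?thesis using that unfolding Suc_le_length_iff by blast
  qed
  have desc: "sorted_wrt (\<ge>) (s0 # s1 # rest)"
    unfolding s[symmetric] by (simp add: sorted_wrt_rev)
  have ms: "image_mset f (mset xs) = add_mset s0 (mset (s1 # rest))"
    using arg_cong[OF s, of mset] by simp
  have "s0 \<in> set (rev (sort (map f xs)))" using s by simp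
  then obtain v where v: "v \<in> set xs" "f v = s0" by auto
  have "image_mset f (mset xs - {#v#}) = image_mset f (mset xs) - {#f v#}"
    using v(1) by (simp add: image_mset_Diff)
  hence rest: "image_mset f (mset (remove1 v xs)) = mset (s1 # rest)"
    using ms v(2) by (simp add: mset_remove1)
  have "f i \<in> set (s1 # rest)" if "i \<in> set xs" "i \<noteq> v" for i
  proof -
    have "i \<in> set (remove1 v xs)" using that assms(1) by (simp add: set_remove1_eq)
    hence "f i \<in># image_mset f (mset (remove1 v xs))"
      by (metis image_eqI set_image_mset set_mset_mset)
    thus ?thesis unfolding rest by simp
  qed
  moreover have "y \<le> s1" if "y \<in> set (s1 # rest)" for y
    using that desc by auto
  ultimately show ?thesis using that[of v] v s desc by auto
qed

lemma powr_weight_identities: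
  fixes a b :: real
  assumes b: "0 < b" and ba: "b \<le> a" and k: "k \<ge> 1"
  defines "\<alpha> \<equiv> (a / b) powr (1 / real k)"
  shows "\<alpha> \<ge> 1" "b * \<alpha> = a powr (1 / real k) * b powr (1 - 1 / real k)"
    "a powr (1 / real k) * b powr (1 - 1 / real k) * \<alpha> ^ (k - 1) = a"
proof -
  have a: "0 < a" using b ba by simp
  show "\<alpha> \<ge> 1" unfolding \<alpha>_def using b ba by (intro ge_one_powr_ge_zero) auto
  show "b * \<alpha> = a powr (1 / real k) * b powr (1 - 1 / real k)"
    unfolding \<alpha>_def using a b by (simp add: powr_divide powr_diff)
  have "\<alpha> ^ (k - 1) = (a / b) powr (1 - 1 / real k)"
    unfolding \<alpha>_def using a b k by (simp add: powr_realpow[symmetric] powr_powr of_nat_diff field_simps)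
  thus "a powr (1 / real k) * b powr (1 - 1 / real k) * \<alpha> ^ (k - 1) = a"
    using a b by (simp add: powr_divide powr_add[symmetric])
qed

lemma powr_mult_powr_complement: "d > 0 \<Longrightarrow> d powr a * d powr (1 - a) = (d::real)"
  by (simp add: powr_add[symmetric])

section \<open>Hypergraphs and the signless Laplacian\<close>

definition link_sum :: "nat set set \<Rightarrow> (nat \<Rightarrow> 'a::comm_semiring_1) \<Rightarrow> nat \<Rightarrow> 'a" where
  "link_sum E f i = (\<Sum>e\<in>{e\<in>E. i \<in> e}. \<Prod>j\<in>e - {i}. f j)"

lemma uniform_hypergraph_finite: "uniform_hypergraph n k E \<Longrightarrow> finite E"
  by (rule finite_subset[of E "Pow {1..n}"]) (auto simp: uniform_hypergraph_def)

lemma uniform_hypergraph_edgeD: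
  assumes "uniform_hypergraph n k E" "e \<in> E"
  shows "e \<subseteq> {1..n}" "card e = k" "finite e"
  using assms finite_subset[of e "{1..n}"] by (auto simp: uniform_hypergraph_def)

lemma uniform_hypergraph_card_edge_remove:
  "uniform_hypergraph n k E \<Longrightarrow> e \<in> E \<Longrightarrow> i \<in> e \<Longrightarrow> card (e - {i}) = k - 1"
  using uniform_hypergraph_edgeD[of n k E e] by simp

lemma link_sum_one: "link_sum E (\<lambda>_. 1) i = of_nat (hdeg E i)"
  by (simp add: link_sum_def hdeg_def)

lemma norm_link_sum_le:
  fixes x :: "nat \<Rightarrow> 'a::real_normed_field"
  shows "norm (link_sum E x i) \<le> link_sum E (\<lambda>j. norm (x j)) i"
  unfolding link_sum_def by (rule order.trans[OF norm_sum]) (simp add: prod_norm)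

lemma finite_index_lists: "finite {xs :: nat list. length xs = m \<and> set xs \<subseteq> {1..n}}"
  using finite_lists_length_eq[of "{1..n}" m] by (simp add: conj_commute)

lemma tensor_apply_deg_tensor:
  assumes "i \<in> {1..n}"
  shows "tensor_apply n (Suc m) (deg_tensor E) x i = of_nat (hdeg E i) * x i ^ m"
proof -
  have "tensor_apply n (Suc m) (deg_tensor E) x i
      = (\<Sum>xs\<in>{xs. length xs = m \<and> set xs \<subseteq> {1..n}}.
           if xs = replicate m i then of_nat (hdeg E i) * x i ^ m else 0)"
    unfolding tensor_apply_def deg_tensor_def
    by (intro sum.cong refl) (auto simp: replicate_length_same prod_list_replicate)
  also have "\<dots> = of_nat (hdeg E i) * x i ^ m"
    using assms finite_index_lists[of m n] by (simp add: sum.delta' set_replicate_conv_if)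
  finally show ?thesis .
qed

lemma index_lists_of_edges:
  assumes U: "uniform_hypergraph n (Suc m) E"
  shows "{xs\<in>{xs. length xs = m \<and> set xs \<subseteq> {1..n}}. insert i (set xs) \<in> E}
       = (\<Union>e\<in>{e\<in>E. i \<in> e}. permutations_of_set (e - {i}))"
proof (intro equalityI subsetI)
  fix xs assume "xs \<in> {xs\<in>{xs. length xs = m \<and> set xs \<subseteq> {1..n}}. insert i (set xs) \<in> E}"
  hence len: "length xs = m" and e: "insert i (set xs) \<in> E" by auto
  have "card (insert i (set xs)) = Suc m" using uniform_hypergraph_edgeD(2)[OF U e] .
  with len card_length[of xs] card_insert_le_m1[of "Suc m" "set xs"]
  have "i \<notin> set xs" "card (set xs) = length xs"
    by (auto simp: card_insert_if split: if_splits)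
  hence "distinct xs" "set xs = insert i (set xs) - {i}" by (auto simp: card_distinct)
  thus "xs \<in> (\<Union>e\<in>{e\<in>E. i \<in> e}. permutations_of_set (e - {i}))"
    using e by (auto simp: permutations_of_set_def)
next
  fix xs assume "xs \<in> (\<Union>e\<in>{e\<in>E. i \<in> e}. permutations_of_set (e - {i}))"
  then obtain e where e: "e \<in> E" "i \<in> e" and xs: "set xs = e - {i}" "distinct xs"
    by (auto simp: permutations_of_set_def)
  have "length xs = m"
    using distinct_card[OF xs(2)] xs(1) uniform_hypergraph_card_edge_remove[OF U e] by simp
  moreover have "insert i (set xs) = e" using xs e by auto
  ultimately show "xs \<in> {xs\<in>{xs. length xs = m \<and> set xs \<subseteq> {1..n}}. insert i (set xs) \<in> E}"
    using uniform_hypergraph_edgeD(1)[OF U e(1)] e xs by auto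
qed

text \<open>Each edge through \<open>i\<close> is hit by the \<open>m!\<close> orderings of its other vertices, which
  cancels the normalising factor \<open>1/m!\<close> of the adjacency tensor.\<close>

lemma tensor_apply_adj_tensor:
  assumes U: "uniform_hypergraph n (Suc m) E"
  shows "tensor_apply n (Suc m) (adj_tensor (Suc m) E) x i = link_sum E x i"
proof -
  let ?c = "complex_of_real (1 / fact m)"
  let ?I = "{xs :: nat list. length xs = m \<and> set xs \<subseteq> {1..n}}"
  have "tensor_apply n (Suc m) (adj_tensor (Suc m) E) x i
      = (\<Sum>xs\<in>?I. if insert i (set xs) \<in> E then ?c * (\<Prod>j\<leftarrow>xs. x j) else 0)"
    unfolding tensor_apply_def adj_tensor_def by (intro sum.cong) auto
  also have "\<dots> = (\<Sum>xs\<in>{xs\<in>?I. insert i (set xs) \<in> E}. ?c * (\<Prod>j\<leftarrow>xs. x j))"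
    by (rule sum.inter_filter[symmetric]) (rule finite_index_lists)
  also have "\<dots> = (\<Sum>e\<in>{e\<in>E. i \<in> e}. \<Sum>xs\<in>permutations_of_set (e - {i}). ?c * (\<Prod>j\<leftarrow>xs. x j))"
    unfolding index_lists_of_edges[OF U]
    using uniform_hypergraph_finite[OF U]
    by (intro sum.UNION_disjoint finite_permutations_of_set ballI)
       (auto simp: permutations_of_set_def)
  also have "\<dots> = (\<Sum>e\<in>{e\<in>E. i \<in> e}. of_nat (fact m) * (?c * (\<Prod>j\<in>e - {i}. x j)))"
  proof (rule sum.cong[OF refl])
    fix e assume e: "e \<in> {e\<in>E. i \<in> e}"
    have "(\<Prod>j\<leftarrow>xs. x j) = (\<Prod>j\<in>e - {i}. x j)" if "xs \<in> permutations_of_set (e - {i})" for xs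
      using that by (auto simp: permutations_of_set_def prod.distinct_set_conv_list[symmetric])
    thus "(\<Sum>xs\<in>permutations_of_set (e - {i}). ?c * (\<Prod>j\<leftarrow>xs. x j))
        = of_nat (fact m) * (?c * (\<Prod>j\<in>e - {i}. x j))"
      using e uniform_hypergraph_card_edge_remove[OF U, of e i] uniform_hypergraph_edgeD(3)[OF U, of e]
      by (simp add: card_permutations_of_set)
  qed
  also have "\<dots> = link_sum E x i" by (simp add: link_sum_def of_real_divide)
  finally show ?thesis .
qed

lemma tensor_apply_signless_laplacian:
  assumes "k \<ge> 1" "uniform_hypergraph n k E" "i \<in> {1..n}"
  shows "tensor_apply n k (signless_laplacian k E) x i
       = of_nat (hdeg E i) * x i ^ (k - 1) + link_sum E x i"
proof -
  obtain m where k: "k = Suc m" using assms(1) by (cases k) auto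
  have "tensor_apply n k (signless_laplacian k E) x i
      = tensor_apply n k (deg_tensor E) x i + tensor_apply n k (adj_tensor k E) x i"
    unfolding tensor_apply_def signless_laplacian_def by (simp add: distrib_right sum.distrib)
  thus ?thesis
    using assms k tensor_apply_deg_tensor tensor_apply_adj_tensor by simp
qed

lemma deg_seq_first_second:
  assumes "n \<ge> 2"
  obtains v where "v \<in> {1..n}" "hdeg E v = deg_seq n E ! 0"
    "\<And>i. i \<in> {1..n} \<Longrightarrow> i \<noteq> v \<Longrightarrow> hdeg E i \<le> deg_seq n E ! 1"
    "deg_seq n E ! 1 \<le> deg_seq n E ! 0"
proof -
  have "set [1..<n+1] = {1..n}" by auto
  thus ?thesis
    using rev_sort_map_first_second[of "[1..<n+1]" "hdeg E"] assms that
    unfolding deg_seq_def by auto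
qed

lemma deg_seq_second_attained:
  assumes "n \<ge> 2"
  obtains q where "q \<in> {1..n}" "hdeg E q = deg_seq n E ! 1"
proof -
  have "1 < length (deg_seq n E)" using assms by (simp add: deg_seq_def)
  hence "deg_seq n E ! 1 \<in> set (deg_seq n E)" by (rule nth_mem)
  also have "set (deg_seq n E) = hdeg E ` {1..<n+1}" by (simp add: deg_seq_def del: upt_Suc)
  finally show ?thesis using that by (auto simp: less_Suc_eq_le)
qed

lemma exists_other_vertex: "n \<ge> (2::nat) \<Longrightarrow> v \<in> {1..n} \<Longrightarrow> \<exists>i\<in>{1..n}. i \<noteq> v"
  by (rule bexI[of _ "if v = 1 then 2 else 1"]) auto

lemma hconnected_hdeg_pos:
  assumes "n \<ge> 2" "uniform_hypergraph n k E" "hconnected n E" "i \<in> {1..n}"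
  shows "hdeg E i > 0"
proof -
  obtain j where j: "j \<in> {1..n}" "j \<noteq> i" using exists_other_vertex[OF assms(1,4)] by blast
  have "(i, j) \<in> {(a, b). \<exists>e\<in>E. a \<in> e \<and> b \<in> e}\<^sup>*"
    using assms(3,4) j unfolding hconnected_def by blast
  then obtain e where "e \<in> E" "i \<in> e"
    using j(2) by (cases rule: converse_rtranclE) auto
  thus ?thesis
    using uniform_hypergraph_finite[OF assms(2)] unfolding hdeg_def by (auto simp: card_gt_0_iff)
qed

section \<open>The spectral radius is attained\<close>

lemma tensor_apply_cong:
  assumes "\<And>j. j \<in> {1..n} \<Longrightarrow> x j = y j"
  shows "tensor_apply n k T x i = tensor_apply n k T y i"
proof -
  have "prod_list (map x xs) = prod_list (map y xs)" if "set xs \<subseteq> {1..n}" for xs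
    using that assms by (induction xs) auto
  thus ?thesis unfolding tensor_apply_def by (intro sum.cong refl) auto
qed

lemma prod_list_map_scale:
  fixes x :: "'b \<Rightarrow> 'a::comm_monoid_mult"
  shows "prod_list (map (\<lambda>j. c * x j) xs) = c ^ length xs * prod_list (map x xs)"
  by (induction xs) (auto simp: algebra_simps)

lemma tensor_apply_scale:
  fixes x :: "nat \<Rightarrow> complex"
  shows "tensor_apply n k T (\<lambda>j. c * x j) i = c ^ (k - 1) * tensor_apply n k T x i"
  unfolding tensor_apply_def sum_distrib_left
  by (intro sum.cong refl) (auto simp: prod_list_map_scale algebra_simps)

lemma tendsto_prod_list_map:
  fixes F :: "nat \<Rightarrow> 'b \<Rightarrow> 'a::{real_normed_algebra_1, comm_monoid_mult}"
  assumes "\<And>j. (\<lambda>m. F m j) \<longlonglongrightarrow> G j"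
  shows "(\<lambda>m. prod_list (map (F m) xs)) \<longlonglongrightarrow> prod_list (map G xs)"
  by (induction xs) (auto intro!: tendsto_mult assms)

lemma tendsto_tensor_apply:
  fixes F :: "nat \<Rightarrow> nat \<Rightarrow> complex"
  assumes "\<And>j. (\<lambda>m. F m j) \<longlonglongrightarrow> G j"
  shows "(\<lambda>m. tensor_apply n k T (F m) i) \<longlonglongrightarrow> tensor_apply n k T G i"
  unfolding tensor_apply_def
  by (intro tendsto_sum tendsto_mult tendsto_const tendsto_prod_list_map assms)

lemma tensor_eigenvalue_normalized:
  assumes "tensor_eigenvalue n k T lam"
  shows "\<exists>x. (\<forall>i\<in>{1..n}. tensor_apply n k T x i = lam * x i ^ (k - 1))
           \<and> (\<Sum>i\<in>{1..n}. cmod (x i) ^ 2) = 1"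
proof -
  obtain x where xne: "\<exists>i\<in>{1..n}. x i \<noteq> 0" and eq: "\<forall>i\<in>{1..n}. tensor_apply n k T x i = lam * x i ^ (k - 1)"
    using assms unfolding tensor_eigenvalue_def by blast
  define s where "s = (\<Sum>i\<in>{1..n}. cmod (x i) ^ 2)"
  have s0: "s > 0"
  proof -
    obtain i where i: "i \<in> {1..n}" "x i \<noteq> 0" using xne by auto
    have "cmod (x i) ^ 2 \<le> s" unfolding s_def using i by (intro member_le_sum) auto
    moreover have "cmod (x i) ^ 2 > 0" using i by simp
    ultimately show ?thesis by linarith
  qed
  define r where "r = 1 / sqrt s"
  have r0: "r > 0" using s0 unfolding r_def by simp
  define y where "y = (\<lambda>j. complex_of_real r * x j)"
  have "\<forall>i\<in>{1..n}. tensor_apply n k T y i = lam * y i ^ (k - 1)"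
  proof
    fix i assume i: "i \<in> {1..n}"
    have "tensor_apply n k T y i = complex_of_real r ^ (k - 1) * tensor_apply n k T x i"
      unfolding y_def by (rule tensor_apply_scale)
    also have "\<dots> = lam * y i ^ (k - 1)" using eq i unfolding y_def by (simp add: power_mult_distrib)
    finally show "tensor_apply n k T y i = lam * y i ^ (k - 1)" .
  qed
  moreover have "(\<Sum>i\<in>{1..n}. cmod (y i) ^ 2) = 1"
  proof -
    have "(\<Sum>i\<in>{1..n}. cmod (y i) ^ 2) = r^2 * s"
      unfolding y_def s_def using r0 by (simp add: norm_mult power_mult_distrib sum_distrib_left)
    also have "\<dots> = 1" unfolding r_def using s0 by (simp add: power_divide)
    finally show ?thesis .
  qed
  ultimately show ?thesis by blast
qed

lemma tensor_eigenvalue_limit: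
  assumes eig: "\<And>m. tensor_eigenvalue n k T (lf m)" and lim: "lf \<longlonglongrightarrow> \<mu>"
  shows "tensor_eigenvalue n k T \<mu>"
proof -
  have "\<forall>m. \<exists>x. (\<forall>i\<in>{1..n}. tensor_apply n k T x i = lf m * x i ^ (k - 1))
      \<and> (\<Sum>i\<in>{1..n}. cmod (x i) ^ 2) = 1"
    using tensor_eigenvalue_normalized[OF eig] by blast
  then obtain xf where xfe: "\<And>m i. i \<in> {1..n} \<Longrightarrow> tensor_apply n k T (xf m) i = lf m * xf m i ^ (k - 1)"
    and xf1: "\<And>m. (\<Sum>i\<in>{1..n}. cmod (xf m i) ^ 2) = 1" by metis
  define g where "g = (\<lambda>m i. if i \<in> {1..n} then xf m i else 0)"
  define C where "C = (\<lambda>i::nat. if i \<in> {1..n} then cball 0 1 else {0::complex})"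
  have cC: "compact (C i)" for i unfolding C_def by auto
  have gC: "g m \<in> Pi\<^sub>E UNIV C" for m
  proof -
    have "cmod (xf m i) \<le> 1" if "i \<in> {1..n}" for i
      using norm_le_1_if_sum_norm_sq_eq_1[OF _ xf1 that] by simp
    thus ?thesis unfolding g_def C_def by (auto simp: PiE_iff)
  qed
  obtain l r where r: "strict_mono r" and conv: "\<And>i. (\<lambda>m. g (r m) i) \<longlonglongrightarrow> l i"
    using seq_compact_PiE_UNIV_coordinatewise[of C g, OF cC gC] by blast
  have "tensor_apply n k T l i = \<mu> * l i ^ (k - 1)" if i: "i \<in> {1..n}" for i
  proof -
    have "tensor_apply n k T (g m) i = lf m * g m i ^ (k - 1)" for m
      using xfe[OF i] i tensor_apply_cong[of n "g m" "xf m" k T i] unfolding g_def by simp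
    hence "(\<lambda>m. tensor_apply n k T (g (r m)) i) \<longlonglongrightarrow> \<mu> * l i ^ (k - 1)"
      using LIMSEQ_subseq_LIMSEQ[OF lim r] by (simp add: o_def) (intro tendsto_mult tendsto_power conv)
    moreover have "(\<lambda>m. tensor_apply n k T (g (r m)) i) \<longlonglongrightarrow> tensor_apply n k T l i"
      by (rule tendsto_tensor_apply) (rule conv)
    ultimately show ?thesis by (rule LIMSEQ_unique[rotated])
  qed
  moreover have "(\<Sum>i\<in>{1..n}. cmod (l i) ^ 2) = 1"
  proof -
    have "(\<lambda>m. \<Sum>i\<in>{1..n}. cmod (g (r m) i) ^ 2) \<longlonglongrightarrow> (\<Sum>i\<in>{1..n}. cmod (l i) ^ 2)"
      by (intro tendsto_sum tendsto_power tendsto_norm conv)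
    moreover have "(\<Sum>i\<in>{1..n}. cmod (g (r m) i) ^ 2) = 1" for m
      using xf1[of "r m"] unfolding g_def by simp
    ultimately show ?thesis by (simp add: LIMSEQ_const_iff)
  qed
  hence "\<exists>i\<in>{1..n}. l i \<noteq> 0" by (rule contrapos_pp) simp
  ultimately show ?thesis unfolding tensor_eigenvalue_def by blast
qed

lemma spectral_radius_attained:
  assumes bnd: "\<And>lam. tensor_eigenvalue n k T lam \<Longrightarrow> cmod lam \<le> B"
    and ne: "\<exists>lam. tensor_eigenvalue n k T lam"
  shows "\<exists>lam. tensor_eigenvalue n k T lam \<and> cmod lam = spectral_radius n k T"
proof -
  define L where "L = cmod ` {lam. tensor_eigenvalue n k T lam}"
  define \<rho> where "\<rho> = Sup L"
  have Lne: "L \<noteq> {}" using ne unfolding L_def by auto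
  have Lbdd: "bdd_above L" unfolding L_def bdd_above_def using bnd by blast
  have "\<exists>lam. tensor_eigenvalue n k T lam \<and> \<rho> - 1 / real (Suc m) < cmod lam" for m
  proof -
    have "\<rho> - 1 / real (Suc m) < Sup L" unfolding \<rho>_def by simp
    then obtain a where "a \<in> L" "\<rho> - 1 / real (Suc m) < a" using less_cSupE[OF _ Lne] by blast
    thus ?thesis unfolding L_def by auto
  qed
  then obtain lf where lf: "\<And>m. tensor_eigenvalue n k T (lf m)"
    and lf_gt: "\<And>m. \<rho> - 1 / real (Suc m) < cmod (lf m)" by metis
  have lf_le: "cmod (lf m) \<le> \<rho>" for m
    unfolding \<rho>_def by (rule cSup_upper) (use lf Lbdd in \<open>auto simp: L_def\<close>)
  have lim_norm: "(\<lambda>m. cmod (lf m)) \<longlonglongrightarrow> \<rho>"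
  proof (rule tendsto_sandwich[of "\<lambda>m. \<rho> - 1 / real (Suc m)" _ _ "\<lambda>m. \<rho>"])
    show "(\<lambda>m. \<rho> - 1 / real (Suc m)) \<longlonglongrightarrow> \<rho>"
      using tendsto_diff[OF tendsto_const[of \<rho>] LIMSEQ_inverse_real_of_nat] by (simp add: inverse_eq_divide)
    show "\<forall>\<^sub>F m in sequentially. \<rho> - 1 / real (Suc m) \<le> cmod (lf m)"
      using lf_gt by (simp add: less_imp_le)
  qed (use lf_le in auto)
  have "seq_compact (cball (0::complex) B)" by (rule compact_imp_seq_compact) simp
  moreover have "\<forall>m. lf m \<in> cball 0 B" using bnd lf by simp
  ultimately obtain \<mu> r where r: "strict_mono r" and lim: "(lf \<circ> r) \<longlonglongrightarrow> \<mu>"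
    unfolding seq_compact_def by meson
  have "(\<lambda>m. cmod (lf (r m))) \<longlonglongrightarrow> cmod \<mu>" using tendsto_norm[OF lim] by (simp add: o_def)
  moreover have "(\<lambda>m. cmod (lf (r m))) \<longlonglongrightarrow> \<rho>" using LIMSEQ_subseq_LIMSEQ[OF lim_norm r] by (simp add: o_def)
  ultimately have "cmod \<mu> = spectral_radius n k T"
    unfolding spectral_radius_def L_def[symmetric] \<rho>_def[symmetric] by (rule LIMSEQ_unique)
  moreover have "tensor_eigenvalue n k T \<mu>" by (rule tensor_eigenvalue_limit[OF _ lim]) (simp add: lf)
  ultimately show ?thesis by blast
qed

lemma spectral_radius_ge_norm:
  assumes "\<And>lam. tensor_eigenvalue n k T lam \<Longrightarrow> cmod lam \<le> B" "tensor_eigenvalue n k T lam"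
  shows "cmod lam \<le> spectral_radius n k T"
  unfolding spectral_radius_def using assms by (intro cSup_upper bdd_aboveI2) auto

lemma spectral_radius_le:
  assumes "\<And>lam. tensor_eigenvalue n k T lam \<Longrightarrow> cmod lam \<le> B" "\<exists>lam. tensor_eigenvalue n k T lam"
  shows "spectral_radius n k T \<le> B"
  unfolding spectral_radius_def using assms by (intro cSup_least) auto

section \<open>Eigenvalues of large modulus\<close>

lemma tensor_eigenvalue_regular:
  assumes "k \<ge> 1" "uniform_hypergraph n k E" "hregular n E" "v \<in> {1..n}"
  shows "tensor_eigenvalue n k (signless_laplacian k E) (2 * of_nat (hdeg E v))"
  unfolding tensor_eigenvalue_def
proof (intro exI[of _ "\<lambda>_. 1"] conjI ballI)
  show "\<exists>i\<in>{1..n}. (1::complex) \<noteq> 0" using assms(4) by auto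
  fix i assume i: "i \<in> {1..n}"
  have "hdeg E i = hdeg E v" using assms(3,4) i unfolding hregular_def by blast
  thus "tensor_apply n k (signless_laplacian k E) (\<lambda>_. 1) i = 2 * of_nat (hdeg E v) * 1 ^ (k - 1)"
    using tensor_apply_signless_laplacian[OF assms(1,2) i] by (simp add: link_sum_one)
qed

lemma tensor_eigenvalue_unit_vector:
  assumes k: "k \<ge> 3" and U: "uniform_hypergraph n k E" and v: "v \<in> {1..n}"
  shows "tensor_eigenvalue n k (signless_laplacian k E) (of_nat (hdeg E v))"
  unfolding tensor_eigenvalue_def
proof (intro exI[of _ "\<lambda>j. if j = v then 1 else 0"] conjI ballI)
  let ?x = "\<lambda>j. if j = v then 1 else (0::complex)"
  show "\<exists>i\<in>{1..n}. ?x i \<noteq> 0" using v by auto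
  fix i assume i: "i \<in> {1..n}"
  have "(\<Prod>j\<in>e - {i}. ?x j) = 0" if e: "e \<in> E" "i \<in> e" for e
  proof -
    have "\<not> e - {i} \<subseteq> {v}"
      using card_mono[of "{v}" "e - {i}"] uniform_hypergraph_card_edge_remove[OF U e] k by auto
    then obtain j where "j \<in> e - {i}" "j \<noteq> v" by auto
    thus ?thesis using uniform_hypergraph_edgeD(3)[OF U e(1)] by (intro prod_zero) auto
  qed
  hence "link_sum E ?x i = 0" unfolding link_sum_def by simp
  thus "tensor_apply n k (signless_laplacian k E) ?x i = of_nat (hdeg E v) * ?x i ^ (k - 1)"
    using tensor_apply_signless_laplacian[OF _ U i, of ?x] k by (cases "i = v") auto
qed

lemma tensor_apply_order_2:
  "tensor_apply n 2 T x i = (\<Sum>j\<in>{1..n}. complex_of_real (T [i, j]) * x j)"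
proof -
  have "{xs :: nat list. length xs = 2 - 1 \<and> set xs \<subseteq> {1..n}} = (\<lambda>j. [j]) ` {1..n}"
    by (auto simp: length_Suc_conv)
  moreover have "inj_on (\<lambda>j. [j]) {1..n}" by (simp add: inj_on_def)
  ultimately show ?thesis unfolding tensor_apply_def by (simp add: sum.reindex)
qed

lemma tensor_eigenvalue_order_2_ge_degree:
  assumes v: "v \<in> {1..n}"
  shows "\<exists>lam. tensor_eigenvalue n 2 (signless_laplacian 2 E) lam \<and> cmod lam \<ge> real (hdeg E v)"
proof -
  define A where "A = (\<lambda>i j. signless_laplacian 2 E [i, j])"
  have sym: "A i j = A j i" for i j
    unfolding A_def signless_laplacian_def deg_tensor_def adj_tensor_def by (auto simp: insert_commute)
  define z0 where "z0 = (\<lambda>i. if i = v then 1 else (0::real))"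
  have "(\<Sum>i\<in>{1..n}. z0 i ^ 2) = (\<Sum>i\<in>{1..n}. z0 i)" by (intro sum.cong) (auto simp: z0_def)
  also have "\<dots> = 1" using v by (simp add: z0_def)
  finally have "(\<Sum>i\<in>{1..n}. z0 i ^ 2) = 1" .
  then obtain x \<mu> where xne: "\<exists>i\<in>{1..n}. x i \<noteq> 0"
    and eq: "\<forall>i\<in>{1..n}. (\<Sum>j\<in>{1..n}. A i j * x j) = \<mu> * x i" and ge: "quad_form {1..n} A z0 \<le> \<mu>"
    using symmetric_eigenvector_ge_quad_form[of "{1..n}" A z0] sym by auto
  have "quad_form {1..n} A z0 = A v v"
    unfolding z0_def using v by (intro quad_form_unit_vector) auto
  hence \<mu>: "real (hdeg E v) \<le> \<mu>"
    using ge by (simp add: A_def signless_laplacian_def deg_tensor_def adj_tensor_def split: if_splits)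
  have "tensor_eigenvalue n 2 (signless_laplacian 2 E) (of_real \<mu>)"
    unfolding tensor_eigenvalue_def
  proof (intro exI[of _ "\<lambda>i. of_real (x i)"] conjI ballI)
    show "\<exists>i\<in>{1..n}. complex_of_real (x i) \<noteq> 0" using xne by auto
    fix i assume "i \<in> {1..n}"
    thus "tensor_apply n 2 (signless_laplacian 2 E) (\<lambda>i. of_real (x i)) i = of_real \<mu> * of_real (x i) ^ (2 - 1)"
      using eq unfolding tensor_apply_order_2 A_def by (simp flip: of_real_mult of_real_sum)
  qed
  thus ?thesis using \<mu> by force
qed

lemma tensor_eigenvalue_ge_degree:
  assumes "k \<ge> 2" "uniform_hypergraph n k E" "v \<in> {1..n}"
  shows "\<exists>lam. tensor_eigenvalue n k (signless_laplacian k E) lam \<and> real (hdeg E v) \<le> cmod lam"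
proof (cases "k = 2")
  case True thus ?thesis using tensor_eigenvalue_order_2_ge_degree[OF assms(3)] by simp
next
  case False thus ?thesis using tensor_eigenvalue_unit_vector[OF _ assms(2,3)] assms(1) by fastforce
qed

section \<open>The weighted maximum principle\<close>

lemma eigenpair_norm_ineq:
  assumes "k \<ge> 1" "uniform_hypergraph n k E" "i \<in> {1..n}"
    and "tensor_apply n k (signless_laplacian k E) x i = lam * x i ^ (k - 1)"
  shows "cmod lam * cmod (x i) ^ (k - 1)
       \<le> real (hdeg E i) * cmod (x i) ^ (k - 1) + link_sum E (\<lambda>j. cmod (x j)) i"
proof -
  have "(lam - of_nat (hdeg E i)) * x i ^ (k - 1) = link_sum E x i"
    using assms tensor_apply_signless_laplacian[OF assms(1-3), of x] by (simp add: algebra_simps)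
  hence "cmod (lam - of_nat (hdeg E i)) * cmod (x i) ^ (k - 1) = cmod (link_sum E x i)"
    by (metis norm_mult norm_power)
  hence "cmod (lam - of_nat (hdeg E i)) * cmod (x i) ^ (k - 1) \<le> link_sum E (\<lambda>j. cmod (x j)) i"
    using norm_link_sum_le[of E x i] by simp
  moreover have "cmod lam \<le> cmod (lam - of_nat (hdeg E i)) + real (hdeg E i)"
    using norm_triangle_ineq[of "lam - of_nat (hdeg E i)" "of_nat (hdeg E i)"] by simp
  hence "cmod lam * cmod (x i) ^ (k - 1)
       \<le> (cmod (lam - of_nat (hdeg E i)) + real (hdeg E i)) * cmod (x i) ^ (k - 1)"
    by (intro mult_right_mono) auto
  ultimately show ?thesis by (simp add: algebra_simps)
qed

lemma link_sum_le_at_max_ratio: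
  fixes y w :: "nat \<Rightarrow> real"
  assumes U: "uniform_hypergraph n k E" and p: "p \<in> {1..n}"
    and yw: "\<And>i. i \<in> {1..n} \<Longrightarrow> 0 \<le> y i \<and> 0 < w i \<and> y i / w i \<le> y p / w p"
  shows "link_sum E y p \<le> (y p / w p) ^ (k - 1) * link_sum E w p"
    and "e \<in> E \<Longrightarrow> p \<in> e \<Longrightarrow> j \<in> e - {p} \<Longrightarrow> y j / w j < y p / w p
         \<Longrightarrow> link_sum E y p < (y p / w p) ^ (k - 1) * link_sum E w p"
proof -
  let ?M = "y p / w p"
  have bound: "0 \<le> y j \<and> y j \<le> ?M * w j" "0 < w j" if "j \<in> {1..n}" for j
    using yw[OF that] by (auto simp: divide_le_eq mult.commute)
  have rhs: "?M ^ (k - 1) * link_sum E w p = (\<Sum>e\<in>{e\<in>E. p \<in> e}. \<Prod>j\<in>e - {p}. ?M * w j)"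
    unfolding link_sum_def sum_distrib_left prod.distrib
    using uniform_hypergraph_card_edge_remove[OF U] by (intro sum.cong) auto
  have term_le: "(\<Prod>j\<in>e - {p}. y j) \<le> (\<Prod>j\<in>e - {p}. ?M * w j)" if "e \<in> {e\<in>E. p \<in> e}" for e
    using that uniform_hypergraph_edgeD(1)[OF U] bound by (intro prod_mono) blast
  show "link_sum E y p \<le> ?M ^ (k - 1) * link_sum E w p"
    unfolding rhs unfolding link_sum_def using term_le by (rule sum_mono)
  assume e: "e \<in> E" "p \<in> e" and j: "j \<in> e - {p}" and lt: "y j / w j < ?M"
  have j1n: "j \<in> {1..n}" using uniform_hypergraph_edgeD(1)[OF U e(1)] j by auto
  have "(\<Prod>j\<in>e - {p}. y j) < (\<Prod>j\<in>e - {p}. ?M * w j)"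
  proof (rule prod_mono_strict[OF j])
    show "y j < ?M * w j" using lt bound(2)[OF j1n] by (simp add: divide_less_eq mult.commute)
    have "0 < ?M" using lt bound[OF j1n] by (smt (verit) divide_nonneg_pos)
    show "finite (e - {p})" using uniform_hypergraph_edgeD(3)[OF U e(1)] by simp
    fix i assume "i \<in> e - {p}"
    hence i: "i \<in> {1..n}" using uniform_hypergraph_edgeD(1)[OF U e(1)] by auto
    show "0 \<le> y i \<and> y i \<le> ?M * w i" using bound(1)[OF i] .
    show "0 < ?M * w i" using \<open>0 < ?M\<close> bound(2)[OF i] by (rule mult_pos_pos)
  qed
  thus "link_sum E y p < ?M ^ (k - 1) * link_sum E w p"
    unfolding rhs unfolding link_sum_def using e term_le uniform_hypergraph_finite[OF U]
    by (intro sum_strict_mono_ex1) auto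
qed

lemma eigen_ineq_at_max_ratio:
  fixes y w :: "nat \<Rightarrow> real"
  assumes U: "uniform_hypergraph n k E" and p: "p \<in> {1..n}"
    and yw: "\<And>i. i \<in> {1..n} \<Longrightarrow> 0 \<le> y i \<and> 0 < w i \<and> y i / w i \<le> y p / w p"
    and yp: "y p > 0"
    and ineq: "t * y p ^ (k - 1) \<le> d * y p ^ (k - 1) + link_sum E y p"
  shows "t * w p ^ (k - 1) \<le> d * w p ^ (k - 1) + link_sum E w p"
    and "e \<in> E \<Longrightarrow> p \<in> e \<Longrightarrow> j \<in> e - {p} \<Longrightarrow> y j / w j < y p / w p
         \<Longrightarrow> t * w p ^ (k - 1) < d * w p ^ (k - 1) + link_sum E w p"
proof -
  define M where "M = y p / w p"
  have Mk: "M ^ (k - 1) > 0" using yp yw[OF p] unfolding M_def by simp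
  have scaled: "M ^ (k - 1) * (t * w p ^ (k - 1))
      \<le> M ^ (k - 1) * (d * w p ^ (k - 1)) + link_sum E y p"
    using ineq yw[OF p] unfolding M_def by (simp add: power_divide field_simps)
  have "M ^ (k - 1) * (t * w p ^ (k - 1)) \<le> M ^ (k - 1) * (d * w p ^ (k - 1) + link_sum E w p)"
    using scaled link_sum_le_at_max_ratio(1)[of n k E p y w, OF U p yw]
    unfolding M_def[symmetric] distrib_left by linarith
  thus "t * w p ^ (k - 1) \<le> d * w p ^ (k - 1) + link_sum E w p"
    using Mk by (simp add: mult_le_cancel_left_pos)
  assume edge: "e \<in> E" "p \<in> e" "j \<in> e - {p}" "y j / w j < y p / w p"
  have "M ^ (k - 1) * (t * w p ^ (k - 1)) < M ^ (k - 1) * (d * w p ^ (k - 1) + link_sum E w p)"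
    using scaled link_sum_le_at_max_ratio(2)[of n k E p y w, OF U p yw edge]
    unfolding M_def[symmetric] distrib_left by linarith
  thus "t * w p ^ (k - 1) < d * w p ^ (k - 1) + link_sum E w p"
    using Mk by (simp add: mult_less_cancel_left_pos)
qed

lemma eigenvector_ineq_at_max_ratio:
  fixes x :: "nat \<Rightarrow> complex" and w :: "nat \<Rightarrow> real"
  assumes k: "k \<ge> 1" and U: "uniform_hypergraph n k E" and xne: "\<exists>i\<in>{1..n}. x i \<noteq> 0"
    and eig: "\<And>i. i \<in> {1..n} \<Longrightarrow> tensor_apply n k (signless_laplacian k E) x i = lam * x i ^ (k - 1)"
    and w: "\<And>i. i \<in> {1..n} \<Longrightarrow> 0 < w i"
    and q: "q \<in> {1..n}" and qmax: "\<And>i. i \<in> {1..n} \<Longrightarrow> cmod (x i) / w i \<le> cmod (x q) / w q"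
  shows "cmod lam * w q ^ (k - 1) \<le> real (hdeg E q) * w q ^ (k - 1) + link_sum E w q"
    and "e \<in> E \<Longrightarrow> q \<in> e \<Longrightarrow> j \<in> e - {q} \<Longrightarrow> cmod (x j) / w j < cmod (x q) / w q
         \<Longrightarrow> cmod lam * w q ^ (k - 1) < real (hdeg E q) * w q ^ (k - 1) + link_sum E w q"
proof -
  have yw: "0 \<le> cmod (x i) \<and> 0 < w i \<and> cmod (x i) / w i \<le> cmod (x q) / w q" if "i \<in> {1..n}" for i
    using w qmax that by simp
  obtain i where i: "i \<in> {1..n}" "x i \<noteq> 0" using xne by auto
  have "0 < cmod (x i) / w i" using i w[OF i(1)] by simp
  hence "0 < cmod (x q) / w q" using qmax[OF i(1)] by linarith
  hence "0 < cmod (x q)" using w[OF q] by (simp add: zero_less_divide_iff)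
  note ineq = eigen_ineq_at_max_ratio[of n k E q "\<lambda>i. cmod (x i)" w,
      OF U q yw this eigenpair_norm_ineq[OF k U q eig[OF q]]]
  show "cmod lam * w q ^ (k - 1) \<le> real (hdeg E q) * w q ^ (k - 1) + link_sum E w q"
    by (rule ineq(1))
  show "e \<in> E \<Longrightarrow> q \<in> e \<Longrightarrow> j \<in> e - {q} \<Longrightarrow> cmod (x j) / w j < cmod (x q) / w q
      \<Longrightarrow> cmod lam * w q ^ (k - 1) < real (hdeg E q) * w q ^ (k - 1) + link_sum E w q"
    by (rule ineq(2))
qed

lemma uniform_hypergraph_obtain_neighbour:
  assumes U: "uniform_hypergraph n k E" and "k \<ge> 2" "hdeg E v > 0"
  obtains e j where "e \<in> E" "v \<in> e" "j \<in> e - {v}"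
proof -
  have "{e\<in>E. v \<in> e} \<noteq> {}" using assms(3) unfolding hdeg_def by (intro notI) simp
  then obtain e where e: "e \<in> E" "v \<in> e" by blast
  have "card (e - {v}) > 0" using uniform_hypergraph_card_edge_remove[OF U e] assms(2) by simp
  then obtain j where "j \<in> e - {v}" by (auto simp: card_gt_0_iff)
  thus ?thesis using that e by blast
qed

lemma link_sum_weight_le:
  fixes \<alpha> :: real
  assumes U: "uniform_hypergraph n k E" and "\<alpha> \<ge> 1"
  shows "link_sum E (\<lambda>j. if j = v then \<alpha> else 1) q \<le> \<alpha> * real (hdeg E q)"
proof -
  have "(\<Prod>j\<in>e - {q}. if j = v then \<alpha> else 1) \<le> \<alpha>" if "e \<in> E" for e
    using assms prod.delta[OF finite_Diff[OF uniform_hypergraph_edgeD(3)[OF U that]], of v "\<lambda>_. \<alpha>"]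
    by simp
  hence "link_sum E (\<lambda>j. if j = v then \<alpha> else 1) q \<le> (\<Sum>e\<in>{e\<in>E. q \<in> e}. \<alpha>)"
    unfolding link_sum_def by (intro sum_mono) auto
  thus ?thesis by (simp add: hdeg_def mult.commute)
qed

lemma link_sum_weight_center:
  "link_sum E (\<lambda>j. if j = v then \<alpha> else 1) v = of_nat (hdeg E v)"
  unfolding link_sum_one[symmetric] link_sum_def by (intro sum.cong refl prod.cong) auto

lemma two_degree_bound_at_max_ratio:
  fixes x :: "nat \<Rightarrow> complex" and D1 D2 c :: real and w :: "nat \<Rightarrow> real"
  assumes D1_def: "D1 = real (hdeg E v)"
    and c_def: "c = D1 powr (1 / real k) * D2 powr (1 - 1 / real k)"
    and w_def: "w = (\<lambda>i. if i = v then (D1 / D2) powr (1 / real k) else 1)"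
    and k: "k \<ge> 2" and U: "uniform_hypergraph n k E" and xne: "\<exists>i\<in>{1..n}. x i \<noteq> 0"
    and eig: "\<And>i. i \<in> {1..n} \<Longrightarrow> tensor_apply n k (signless_laplacian k E) x i = lam * x i ^ (k - 1)"
    and others: "\<And>i. i \<in> {1..n} \<Longrightarrow> i \<noteq> v \<Longrightarrow> real (hdeg E i) \<le> D2"
    and D2: "0 < D2" "D2 \<le> D1"
    and q: "q \<in> {1..n}" and qmax: "\<And>i. i \<in> {1..n} \<Longrightarrow> cmod (x i) / w i \<le> cmod (x q) / w q"
  shows "q \<noteq> v \<Longrightarrow> cmod lam \<le> D2 + c" and "q = v \<Longrightarrow> cmod lam \<le> D1 + c"
    and "e \<in> E \<Longrightarrow> v \<in> e \<Longrightarrow> j \<in> e - {v} \<Longrightarrow> cmod (x j) / w j < cmod (x v) / w v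
         \<Longrightarrow> q = v \<Longrightarrow> cmod lam < D1 + c"
proof -
  define \<alpha> where "\<alpha> = (D1 / D2) powr (1 / real k)"
  have \<alpha>: "\<alpha> \<ge> 1" "D2 * \<alpha> = c" "c * \<alpha> ^ (k - 1) = D1"
    using powr_weight_identities[of D2 D1 k] D2 k unfolding c_def \<alpha>_def by auto
  have w_def': "w = (\<lambda>i. if i = v then \<alpha> else 1)" unfolding w_def \<alpha>_def ..
  have "0 < w i" for i using \<alpha>(1) unfolding w_def' by simp
  note ineq = eigenvector_ineq_at_max_ratio[OF _ U xne eig this q qmax]
  show "cmod lam \<le> D2 + c" if "q \<noteq> v"
  proof -
    have "cmod lam \<le> real (hdeg E q) + \<alpha> * real (hdeg E q)"
      using ineq(1) k link_sum_weight_le[OF U \<alpha>(1), of v q] that unfolding w_def' by simp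
    also have "\<dots> \<le> D2 + \<alpha> * D2"
      using others[OF q that] \<alpha>(1) by (intro add_mono mult_left_mono) auto
    finally show ?thesis using \<alpha>(2) by (simp add: mult.commute)
  qed
  have link_v: "link_sum E w v = D1" unfolding w_def' D1_def by (rule link_sum_weight_center)
  show "cmod lam \<le> D1 + c" if "q = v"
  proof -
    have "cmod lam * \<alpha> ^ (k - 1) \<le> D1 * \<alpha> ^ (k - 1) + c * \<alpha> ^ (k - 1)"
      using ineq(1) k link_v \<alpha>(3) that unfolding w_def' D1_def by simp
    thus ?thesis using \<alpha>(1) by (simp add: distrib_right[symmetric] mult_le_cancel_right_pos)
  qed
  assume "e \<in> E" "v \<in> e" "j \<in> e - {v}" "cmod (x j) / w j < cmod (x v) / w v" "q = v"
  hence "cmod lam * \<alpha> ^ (k - 1) < D1 * \<alpha> ^ (k - 1) + c * \<alpha> ^ (k - 1)"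
    using ineq(2) k link_v \<alpha>(3) unfolding w_def' D1_def by simp
  thus "cmod lam < D1 + c" using \<alpha>(1) by (simp add: distrib_right[symmetric] mult_less_cancel_right_pos)
qed

lemma eigenvalue_norm_le_two_degree_bound:
  fixes D2 :: real
  assumes k: "k \<ge> 2" and U: "uniform_hypergraph n k E"
    and lam: "tensor_eigenvalue n k (signless_laplacian k E) lam"
    and v: "v \<in> {1..n}" and others: "\<And>i. i \<in> {1..n} \<Longrightarrow> i \<noteq> v \<Longrightarrow> real (hdeg E i) \<le> D2"
    and D2: "0 < D2" "D2 \<le> real (hdeg E v)"
  shows "cmod lam \<le> real (hdeg E v) + real (hdeg E v) powr (1 / real k) * D2 powr (1 - 1 / real k)"
    and "cmod lam = real (hdeg E v) + real (hdeg E v) powr (1 / real k) * D2 powr (1 - 1 / real k)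
         \<Longrightarrow> real (hdeg E v) = D2"
proof -
  obtain x where xne: "\<exists>i\<in>{1..n}. x i \<noteq> 0"
    and eig: "\<And>i. i \<in> {1..n} \<Longrightarrow> tensor_apply n k (signless_laplacian k E) x i = lam * x i ^ (k - 1)"
    using lam unfolding tensor_eigenvalue_def by blast
  define D1 where "D1 = real (hdeg E v)"
  define c where "c = D1 powr (1 / real k) * D2 powr (1 - 1 / real k)"
  define w where "w = (\<lambda>i. if i = v then (D1 / D2) powr (1 / real k) else 1)"
  define maximal where "maximal q \<longleftrightarrow> q \<in> {1..n} \<and> (\<forall>i\<in>{1..n}. cmod (x i) / w i \<le> cmod (x q) / w q)" for q
  have D21: "D2 \<le> D1" using D2(2) unfolding D1_def .
  note at_max = two_degree_bound_at_max_ratio[OF D1_def c_def w_def k U xne]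
  have off_center: "cmod lam \<le> D2 + c" if "maximal q" "q \<noteq> v" for q
    by (rule at_max(1)) (use eig others D2(1) D21 that in \<open>auto simp: maximal_def\<close>)
  have center: "cmod lam \<le> D1 + c" if "maximal v"
    by (rule at_max(2)) (use eig others D2(1) D21 that in \<open>auto simp: maximal_def\<close>)
  have strict: "cmod lam < D1 + c"
    if "maximal v" "e \<in> E" "v \<in> e" "j \<in> e - {v}" "cmod (x j) / w j < cmod (x v) / w v" for e j
    by (rule at_max(3)) (use eig others D2(1) D21 that in \<open>auto simp: maximal_def\<close>)
  obtain p where "p \<in> {1..n}" "\<And>i. i \<in> {1..n} \<Longrightarrow> cmod (x i) / w i \<le> cmod (x p) / w p"
    using finite_obtains_argmax[of "{1..n}" "\<lambda>i. cmod (x i) / w i"] v by auto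
  hence p: "maximal p" unfolding maximal_def by blast
  have "cmod lam \<le> D1 + c"
  proof (cases "p = v")
    case True thus ?thesis using center p by simp
  next
    case False thus ?thesis using off_center[OF p False] D21 by simp
  qed
  thus "cmod lam \<le> real (hdeg E v) + real (hdeg E v) powr (1 / real k) * D2 powr (1 - 1 / real k)"
    unfolding D1_def c_def .
  assume "cmod lam = real (hdeg E v) + real (hdeg E v) powr (1 / real k) * D2 powr (1 - 1 / real k)"
  hence eq: "cmod lam = D1 + c" unfolding D1_def c_def .
  \<comment> \<open>equality excludes the strict case at \<open>v\<close>, so a neighbour of \<open>v\<close> is maximal as well\<close>
  obtain q where q: "maximal q" "q \<noteq> v"
  proof (cases "p = v")
    case True
    have "0 < hdeg E v" using D2 by simp
    then obtain e j where e: "e \<in> E" "v \<in> e" and j: "j \<in> e - {v}"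
      using uniform_hypergraph_obtain_neighbour[OF U k] by blast
    have "\<not> cmod (x j) / w j < cmod (x v) / w v" using strict[OF _ e j] p True eq by auto
    moreover have "j \<in> {1..n}" using j uniform_hypergraph_edgeD(1)[OF U e(1)] by auto
    ultimately have "maximal j" using p True unfolding maximal_def by fastforce
    thus ?thesis using that j by blast
  next
    case False thus ?thesis using that p by blast
  qed
  hence "D1 \<le> D2" using off_center eq by fastforce
  thus "real (hdeg E v) = D2" using D2(2) unfolding D1_def by simp
qed

lemma eigenvector_max_modulus_spreads:
  fixes x :: "nat \<Rightarrow> complex"
  assumes k: "k \<ge> 1" and U: "uniform_hypergraph n k E" and xne: "\<exists>i\<in>{1..n}. x i \<noteq> 0"
    and eig: "\<And>i. i \<in> {1..n} \<Longrightarrow> tensor_apply n k (signless_laplacian k E) x i = lam * x i ^ (k - 1)"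
    and vmax: "\<And>i. i \<in> {1..n} \<Longrightarrow> hdeg E i \<le> hdeg E v" and eq: "cmod lam = 2 * real (hdeg E v)"
    and p: "p \<in> {1..n}" and pmax: "\<And>i. i \<in> {1..n} \<Longrightarrow> cmod (x i) \<le> cmod (x p)"
  shows "hdeg E p = hdeg E v"
    and "e \<in> E \<Longrightarrow> p \<in> e \<Longrightarrow> j \<in> e \<Longrightarrow> j \<in> {1..n} \<and> (\<forall>i\<in>{1..n}. cmod (x i) \<le> cmod (x j))"
proof -
  note ineq = eigenvector_ineq_at_max_ratio[OF k U xne eig _ p, of "\<lambda>_. 1"]
  have "cmod lam * 1 ^ (k - 1) \<le> real (hdeg E p) * 1 ^ (k - 1) + link_sum E (\<lambda>_. 1) p"
    by (rule ineq(1)) (use pmax in auto)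
  thus deg: "hdeg E p = hdeg E v" using eq vmax[OF p] by (simp add: link_sum_one)
  assume e: "e \<in> E" "p \<in> e" and j: "j \<in> e"
  have "\<not> cmod (x j) < cmod (x p)"
  proof
    assume "cmod (x j) < cmod (x p)"
    have "cmod lam * 1 ^ (k - 1) < real (hdeg E p) * 1 ^ (k - 1) + link_sum E (\<lambda>_. 1) p"
      by (rule ineq(2)) (use pmax e j \<open>cmod (x j) < cmod (x p)\<close> in auto)
    thus False using eq deg by (simp add: link_sum_one)
  qed
  thus "j \<in> {1..n} \<and> (\<forall>i\<in>{1..n}. cmod (x i) \<le> cmod (x j))"
    using pmax j uniform_hypergraph_edgeD(1)[OF U e(1)] by force
qed

lemma hregular_if_eigenvalue_norm_eq:
  assumes k: "k \<ge> 1" and U: "uniform_hypergraph n k E" and C: "hconnected n E"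
    and lam: "tensor_eigenvalue n k (signless_laplacian k E) lam"
    and v: "v \<in> {1..n}" and vmax: "\<And>i. i \<in> {1..n} \<Longrightarrow> hdeg E i \<le> hdeg E v"
    and eq: "cmod lam = 2 * real (hdeg E v)"
  shows "hregular n E"
proof -
  obtain x where xne: "\<exists>i\<in>{1..n}. x i \<noteq> 0"
    and eig: "\<And>i. i \<in> {1..n} \<Longrightarrow> tensor_apply n k (signless_laplacian k E) x i = lam * x i ^ (k - 1)"
    using lam unfolding tensor_eigenvalue_def by blast
  define P where "P = {p\<in>{1..n}. \<forall>i\<in>{1..n}. cmod (x i) \<le> cmod (x p)}"
  note spreads = eigenvector_max_modulus_spreads[OF k U xne eig vmax eq]
  obtain p0 where "p0 \<in> {1..n}" "\<And>i. i \<in> {1..n} \<Longrightarrow> cmod (x i) \<le> cmod (x p0)"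
    using finite_obtains_argmax[of "{1..n}" "\<lambda>i. cmod (x i)"] v by auto
  hence p0: "p0 \<in> P" unfolding P_def by blast
  have "i \<in> P" if "i \<in> {1..n}" for i
  proof -
    have "(p0, i) \<in> {(a, b). \<exists>e\<in>E. a \<in> e \<and> b \<in> e}\<^sup>*"
      using C p0 that unfolding hconnected_def P_def by blast
    thus ?thesis
    proof (induction rule: rtrancl_induct)
      case base show ?case by (rule p0)
    next
      case (step a b)
      then obtain e where "e \<in> E" "a \<in> e" "b \<in> e" by blast
      thus ?case using spreads(2) step.IH unfolding P_def by blast
    qed
  qed
  hence "hdeg E i = hdeg E v" if "i \<in> {1..n}" for i using spreads(1) that unfolding P_def by blast
  thus ?thesis unfolding hregular_def by simp
qed

lemma spectral_radius_signless_laplacian_bounds: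
  fixes D2 :: real
  assumes k: "k \<ge> 2" and n: "n \<ge> 2" and U: "uniform_hypergraph n k E" and C: "hconnected n E"
    and v: "v \<in> {1..n}" and others: "\<And>i. i \<in> {1..n} \<Longrightarrow> i \<noteq> v \<Longrightarrow> real (hdeg E i) \<le> D2"
    and D2: "0 < D2" "D2 \<le> real (hdeg E v)"
  defines "\<rho> \<equiv> spectral_radius n k (signless_laplacian k E)"
    and "B \<equiv> real (hdeg E v) + real (hdeg E v) powr (1 / real k) * D2 powr (1 - 1 / real k)"
  shows "real (hdeg E v) \<le> \<rho>" "\<rho> \<le> B" "\<rho> = B \<longleftrightarrow> hregular n E"
proof -
  let ?Q = "signless_laplacian k E"
  have vmax: "hdeg E i \<le> hdeg E v" if "i \<in> {1..n}" for i
    using others[OF that] D2 by (cases "i = v") auto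
  have bound: "cmod lam \<le> B" and bound_eq: "cmod lam = B \<Longrightarrow> real (hdeg E v) = D2"
    if "tensor_eigenvalue n k ?Q lam" for lam
    using eigenvalue_norm_le_two_degree_bound[OF k U that v others D2] unfolding B_def by auto
  obtain lam0 where lam0: "tensor_eigenvalue n k ?Q lam0" "real (hdeg E v) \<le> cmod lam0"
    using tensor_eigenvalue_ge_degree[OF k U v] by auto
  hence ex: "\<exists>lam. tensor_eigenvalue n k ?Q lam" by blast
  show "real (hdeg E v) \<le> \<rho>" using spectral_radius_ge_norm[OF bound lam0(1)] lam0(2) unfolding \<rho>_def by simp
  show upper: "\<rho> \<le> B" unfolding \<rho>_def using bound ex by (rule spectral_radius_le)
  have B_eq: "B = 2 * real (hdeg E v)" if "D2 = real (hdeg E v)"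
    using that D2 powr_mult_powr_complement unfolding B_def by simp
  show "\<rho> = B \<longleftrightarrow> hregular n E"
  proof
    assume "\<rho> = B"
    then obtain lam where lam: "tensor_eigenvalue n k ?Q lam" "cmod lam = B"
      using spectral_radius_attained[OF bound ex] unfolding \<rho>_def by metis
    hence "real (hdeg E v) = D2" using bound_eq by blast
    hence "cmod lam = 2 * real (hdeg E v)" using lam(2) B_eq by simp
    thus "hregular n E" using hregular_if_eigenvalue_norm_eq[OF _ U C lam(1) v vmax] k by simp
  next
    assume reg: "hregular n E"
    obtain i where i: "i \<in> {1..n}" "i \<noteq> v" using exists_other_vertex[OF n v] by blast
    hence "hdeg E i = hdeg E v" using reg v unfolding hregular_def by blast
    hence "B = 2 * real (hdeg E v)" using others[OF i] D2 B_eq by simp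
    thus "\<rho> = B"
      using spectral_radius_ge_norm[OF bound tensor_eigenvalue_regular[OF _ U reg v]] upper k
      unfolding \<rho>_def by (simp add: norm_mult)
  qed
qed

theorem corollary2p1:
  fixes n k :: nat and E :: "nat set set"
  assumes "k \<ge> 2" and "n \<ge> 2"
    and "uniform_hypergraph n k E"
    and "hconnected n E"
  defines "d1 \<equiv> real (deg_seq n E ! 0)"
    and "d2 \<equiv> real (deg_seq n E ! 1)"
    and "\<rho> \<equiv> spectral_radius n k (signless_laplacian k E)"
  shows "\<rho> \<ge> d1 \<and>
    \<rho> \<le> d1 + d1 powr (1 / real k) * d2 powr (1 - 1 / real k) \<and>
    (\<rho> = d1 + d1 powr (1 / real k) * d2 powr (1 - 1 / real k) \<longleftrightarrow> hregular n E)"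
proof -
  obtain v where v: "v \<in> {1..n}" "hdeg E v = deg_seq n E ! 0"
    and others: "\<And>i. i \<in> {1..n} \<Longrightarrow> i \<noteq> v \<Longrightarrow> hdeg E i \<le> deg_seq n E ! 1"
    and d21: "deg_seq n E ! 1 \<le> deg_seq n E ! 0"
    using deg_seq_first_second[OF assms(2)] by metis
  obtain q where q: "q \<in> {1..n}" "hdeg E q = deg_seq n E ! 1"
    using deg_seq_second_attained[OF assms(2)] by metis
  have "0 < d2" using hconnected_hdeg_pos[OF assms(2-4) q(1)] q(2) unfolding d2_def by simp
  moreover have "real (hdeg E i) \<le> d2" if "i \<in> {1..n}" "i \<noteq> v" for i
    using others[OF that] unfolding d2_def by simp
  moreover have "d2 \<le> real (hdeg E v)" "d1 = real (hdeg E v)"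
    using d21 v(2) unfolding d1_def d2_def by simp_all
  ultimately show ?thesis
    using spectral_radius_signless_laplacian_bounds[OF assms(1-4) v(1), of d2] unfolding \<rho>_def by simp
qed

end
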